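(* For every integer $v\ge 1$ there is a polynomial $p_{v-1}(x)$ of degree $v-1$ with real coefficients such that for all integers $m\ge1$, $$S_{m,v}=(2m^2)^{-v}(m^2-1)\,p_{v-1}(m^2).$$ Its leading coefficient is $2^{v}\zeta(2v)$, and its constant term is $$p_{v-1}(0)=\frac{2^{v}}{(2v-1)!}\sum_{j=0}^{v-1}\pi^{2j}\,s(v,j)\,\Gamma(2v-2j)\,\zeta(2v-2j).$$
   Context: The Gardner–Fisher sum is $S_{m,v}=\left(\frac{\pi}{2m}\right)^{2v}\sum_{k=1}^{m-1}\sin^{-2v}\!\left(\frac{k\pi}{2m}\right)$. For integers $v\ge1$ and $0\le n\le v-1$, $s(v,n)$ denotes the $n$-th elementary symmetric polynomial evaluated at $1^2,2^2,\dots,(v-1)^2$, with $s(v,0)=1$. $\zeta$ is the Riemann zeta function. *)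

theory Defs
  imports "HOL-Analysis.Analysis" "HOL-Computational_Algebra.Polynomial"
begin

text \<open>Riemann zeta function on the reals, via its Dirichlet series (used only for s > 1).\<close>
definition zeta_real :: "real \<Rightarrow> real" where
  "zeta_real s = (\<Sum>n. 1 / (real (Suc n)) powr s)"

definition GF_sum :: "nat \<Rightarrow> nat \<Rightarrow> real" where
  "GF_sum m v = (pi / (2 * real m)) ^ (2 * v) *
     (\<Sum>k = 1..m - 1. 1 / (sin (real k * pi / (2 * real m))) ^ (2 * v))"

definition esym_sq :: "nat \<Rightarrow> nat \<Rightarrow> real" where
  "esym_sq v n = (\<Sum>A \<in> {A. A \<subseteq> {1..v - 1} \<and> card A = n}. \<Prod>i\<in>A. (real i)^2)"

end

(*
  Let G_k(t) = \<Sum>_{n \<in> \<int>} (t - n)^{-k}.  The difference G_2(t) - (\<pi> / sin \<pi>t)^2 is bounded and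
  periodic, and both terms satisfy f(t/2) + f((t+1)/2) = 4 f(t); hence the difference vanishes.
  Since G_k' = -k G_{k+1} while (\<pi> csc \<pi>t)^{2n} has second derivative
  2n(2n+1) (\<pi> csc \<pi>t)^{2n+2} - 4n^2\<pi>^2 (\<pi> csc \<pi>t)^{2n}, induction on n writes (\<pi> csc \<pi>t)^{2v}
  as a linear combination of G_2, ..., G_{2v} whose coefficients involve s(v, j).
  The points t = k/(2m), 0 < k < 2m, k \<noteq> m, together with their integer translates, are exactly the
  r/(2m) with m not dividing r, so summing G_s over them gives (2m)^s (1 - m^{-s}) 2\<zeta>(s).  The sum over
  0 < k < m is half of that, so S_{m,v} is a combination of the numbers m^{2j+2} - 1, each divisible
  by m^2 - 1.
*)

theory Submission
  imports Defs
begin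

section \<open>Reciprocal power sums over the integers\<close>

text \<open>Only meaningful for \<open>k \<ge> 2\<close>; otherwise the family is not summable and \<open>infsum\<close> returns 0.\<close>

definition recip_power_sum :: "nat \<Rightarrow> real \<Rightarrow> real" where
  "recip_power_sum k t = (\<Sum>\<^sub>\<infinity>n::int. 1 / (t - of_int n) ^ k)"

lemma recip_power_tail_bound:
  fixes x c :: real
  assumes "2 \<le> k" "\<bar>x\<bar> \<le> c" "2 * c + 2 \<le> real j"
  shows "\<bar>1 / (x - real j) ^ k\<bar> \<le> 4 / real j ^ 2"
    and "\<bar>1 / (x + real j + 1) ^ k\<bar> \<le> 4 / real j ^ 2"
proof -
  have bound: "\<bar>1 / y ^ k\<bar> \<le> 4 / real j ^ 2" if y: "real j \<le> 2 * \<bar>y\<bar>" for y :: real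
  proof -
    have j2: "2 \<le> real j" and y1: "1 \<le> \<bar>y\<bar>" using assms y by linarith+
    have "(real j / 2) ^ 2 \<le> \<bar>y\<bar> ^ 2" using y j2 by (intro power_mono) auto
    also have "\<dots> \<le> \<bar>y\<bar> ^ k" using y1 assms(1) by (intro power_increasing) auto
    finally have "real j ^ 2 / 4 \<le> \<bar>y\<bar> ^ k" by (simp add: power_divide)
    then have "1 / \<bar>y\<bar> ^ k \<le> 1 / (real j ^ 2 / 4)" using j2 y1 by (intro divide_left_mono) auto
    then show ?thesis by (simp add: power_abs)
  qed
  show "\<bar>1 / (x - real j) ^ k\<bar> \<le> 4 / real j ^ 2"
    using assms by (intro bound) (smt (verit))
  show "\<bar>1 / (x + real j + 1) ^ k\<bar> \<le> 4 / real j ^ 2"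
    using assms by (intro bound) (smt (verit))
qed

lemma summable_four_over_square: "summable (\<lambda>j::nat. 4 / real j ^ 2)"
proof -
  have "summable (\<lambda>j::nat. inverse (real j ^ 2))" by (rule inverse_power_summable) simp
  from summable_mult[OF this, of 4] show ?thesis by (simp add: divide_inverse)
qed

lemma eventually_real_ge_sequentially: "\<forall>\<^sub>F j in sequentially. c \<le> real j"
  using filterlim_real_sequentially by (simp add: filterlim_at_top)

lemma has_sum_int_nat_split:
  fixes f :: "int \<Rightarrow> real"
  assumes "summable (\<lambda>j. \<bar>f (int j)\<bar>)" "summable (\<lambda>j. \<bar>f (- int j - 1)\<bar>)"
  shows "(f has_sum ((\<Sum>j. f (int j)) + (\<Sum>j. f (- int j - 1)))) UNIV"
proof -
  have pos: "(f has_sum (\<Sum>j. f (int j))) (range int)"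
    using norm_summable_imp_has_sum[of "\<lambda>j. f (int j)"] assms(1)
      has_sum_reindex[of int UNIV f] summable_rabs_cancel[OF assms(1)]
    by (auto simp: o_def summable_sums)
  have neg: "(f has_sum (\<Sum>j. f (- int j - 1))) (range (\<lambda>j::nat. - int j - 1))"
    using norm_summable_imp_has_sum[of "\<lambda>j. f (- int j - 1)"] assms(2)
      has_sum_reindex[of "\<lambda>j::nat. - int j - 1" UNIV f] summable_rabs_cancel[OF assms(2)]
    by (auto simp: o_def summable_sums inj_on_def)
  have "x \<in> range int \<or> x \<in> range (\<lambda>j::nat. - int j - 1)" for x :: int
  proof (cases "x \<ge> 0")
    case True
    then show ?thesis by (metis nonneg_int_cases rangeI)
  next
    case False
    then have "x = - int (nat (- x - 1)) - 1" by simp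
    then show ?thesis by blast
  qed
  then have "range int \<union> range (\<lambda>j::nat. - int j - 1) = UNIV" by blast
  moreover have "range int \<inter> range (\<lambda>j::nat. - int j - 1) = {}" by auto
  ultimately show ?thesis using has_sum_Un_disjoint[OF pos neg] by simp
qed

lemma summable_recip_power_tails:
  assumes "2 \<le> k"
  shows "summable (\<lambda>j. \<bar>1 / (t - real j) ^ k\<bar>)" "summable (\<lambda>j. \<bar>1 / (t + real j + 1) ^ k\<bar>)"
  by (rule summable_comparison_test_ev[OF _ summable_four_over_square],
      use eventually_real_ge_sequentially[of "2 * \<bar>t\<bar> + 2"] in \<open>eventually_elim\<close>,
      use recip_power_tail_bound[OF assms, of t "\<bar>t\<bar>"] in auto)+

lemma has_sum_recip_power:
  assumes "2 \<le> k"
  shows "((\<lambda>n::int. 1 / (t - of_int n) ^ k) has_sum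
           ((\<Sum>j. 1 / (t - real j) ^ k) + (\<Sum>j. 1 / (t + real j + 1) ^ k))) UNIV"
proof -
  have neg: "t - of_int (- int j - 1) = t + real j + 1" for j by simp
  show ?thesis
    using has_sum_int_nat_split[of "\<lambda>n. 1 / (t - of_int n) ^ k"] summable_recip_power_tails[OF assms]
    unfolding neg by simp
qed

lemma recip_power_summable_on: "2 \<le> k \<Longrightarrow> (\<lambda>n::int. 1 / ((t::real) - of_int n) ^ k) summable_on A"
  using summable_on_subset_banach[OF has_sum_imp_summable[OF has_sum_recip_power] subset_UNIV] by blast

lemma sums_recip_power_sum:
  assumes "2 \<le> k"
  shows "(\<lambda>j. 1 / (t - real j) ^ k + 1 / (t + real j + 1) ^ k) sums recip_power_sum k t"
proof -
  have "recip_power_sum k t = (\<Sum>j. 1 / (t - real j) ^ k) + (\<Sum>j. 1 / (t + real j + 1) ^ k)"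
    unfolding recip_power_sum_def using has_sum_recip_power[OF assms] by (rule infsumI)
  then show ?thesis
    using summable_recip_power_tails[OF assms, of t]
    by (simp add: sums_add summable_rabs_cancel summable_sums)
qed

lemma has_real_derivative_inverse_power:
  assumes "(f has_real_derivative 1) (at x)" "f x \<noteq> 0"
  shows "((\<lambda>x. 1 / f x ^ k) has_real_derivative (- real k / f x ^ Suc k)) (at x)"
proof -
  have "((\<lambda>x. inverse (f x ^ k)) has_real_derivative
         - (real k * (1 * f x ^ (k - Suc 0)) * inverse ((f x ^ k) ^ Suc (Suc 0)))) (at x)"
    using assms by (intro DERIV_inverse_fun DERIV_power) auto
  moreover have "- (real k * (1 * f x ^ (k - Suc 0)) * inverse ((f x ^ k) ^ Suc (Suc 0))) = - real k / f x ^ Suc k"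
    using assms(2) by (cases k) (simp_all add: field_simps power2_eq_square)
  ultimately show ?thesis by (simp add: inverse_eq_divide)
qed

lemma uniformly_convergent_recip_power_series:
  assumes k: "2 \<le> k" and bounded: "\<And>x. x \<in> S \<Longrightarrow> \<bar>x\<bar> \<le> c"
  shows "uniformly_convergent_on S (\<lambda>n x. \<Sum>i<n. a * (1 / (x - real i) ^ k + 1 / (x + real i + 1) ^ k))"
proof (rule Weierstrass_m_test'_ev)
  show "summable (\<lambda>j. \<bar>a\<bar> * (4 / real j ^ 2 + 4 / real j ^ 2))"
    using summable_four_over_square by (intro summable_mult summable_add)
  show "\<forall>\<^sub>F j in sequentially. \<forall>x\<in>S.
          norm (a * (1 / (x - real j) ^ k + 1 / (x + real j + 1) ^ k)) \<le> \<bar>a\<bar> * (4 / real j ^ 2 + 4 / real j ^ 2)"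
    using eventually_real_ge_sequentially[of "2 * c + 2"]
  proof eventually_elim
    case (elim j)
    show ?case
    proof
      fix x assume "x \<in> S"
      note bound = recip_power_tail_bound[OF k bounded[OF this] elim]
      show "norm (a * (1 / (x - real j) ^ k + 1 / (x + real j + 1) ^ k)) \<le> \<bar>a\<bar> * (4 / real j ^ 2 + 4 / real j ^ 2)"
        unfolding real_norm_def abs_mult
        by (intro mult_left_mono abs_triangle_ineq[THEN order.trans] add_mono bound) simp
    qed
  qed
qed

lemma recip_power_sum_deriv:
  assumes k: "2 \<le> k" and t: "t \<notin> \<int>"
  shows "(recip_power_sum k has_real_derivative (- real k * recip_power_sum (Suc k) t)) (at t)"
proof -
  have "open (- \<int> :: real set)" by (simp add: open_Compl)
  then obtain d where d: "0 < d" "ball t d \<subseteq> - \<int>" using t by (auto simp: open_contains_ball)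
  define S where "S = ball t (min d 1)"
  define f where "f j x = 1 / (x - real j) ^ k + 1 / (x + real j + 1) ^ k" for j x
  define f' where "f' j x = - real k * (1 / (x - real j) ^ Suc k + 1 / (x + real j + 1) ^ Suc k)" for j x
  have der: "(f j has_field_derivative f' j x) (at x within S)" if "x \<in> S" for j x
  proof -
    have "x \<notin> \<int>" using d that by (auto simp: S_def)
    then have "x - real j \<noteq> 0" "x + real j + 1 \<noteq> 0"
      by (metis Ints_of_nat eq_iff_diff_eq_0, metis Ints_diff Ints_minus Ints_of_nat Ints_1 add_eq_0_iff2 diff_minus_eq_add add.assoc)
    then have "(f j has_field_derivative - real k / (x - real j) ^ Suc k + - real k / (x + real j + 1) ^ Suc k) (at x)"
      unfolding f_def by (intro DERIV_add has_real_derivative_inverse_power) (auto intro!: derivative_eq_intros)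
    moreover have "- real k / (x - real j) ^ Suc k + - real k / (x + real j + 1) ^ Suc k = f' j x"
      by (simp add: f'_def distrib_left)
    ultimately show ?thesis by (metis has_field_derivative_at_within)
  qed
  have unif: "uniformly_convergent_on S (\<lambda>n x. \<Sum>i<n. f' i x)"
    unfolding f'_def using k by (intro uniformly_convergent_recip_power_series[where c = "\<bar>t\<bar> + 1"])
      (auto simp: S_def dist_real_def)
  have tS: "t \<in> S" "t \<in> interior S" using d by (simp_all add: S_def)
  have sum_f: "(\<lambda>j. f j x) sums recip_power_sum k x" for x
    unfolding f_def by (rule sums_recip_power_sum[OF k])
  have "((\<lambda>x. \<Sum>n. f n x) has_field_derivative (\<Sum>n. f' n t)) (at t)"
    by (rule has_field_derivative_series'(2)[OF _ der unif tS(1) sums_summable[OF sum_f] tS(2)])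
       (simp add: S_def)
  moreover have "(\<lambda>x. \<Sum>n. f n x) = recip_power_sum k" using sum_f by (auto simp: sums_iff)
  moreover have "(\<lambda>n. f' n t) sums (- real k * recip_power_sum (Suc k) t)"
    unfolding f'_def using sums_recip_power_sum[of "Suc k" t] k by (intro sums_mult) auto
  ultimately show ?thesis by (simp add: sums_iff)
qed

lemma recip_power_sum_shift: "recip_power_sum k (t + of_int m) = recip_power_sum k t"
  unfolding recip_power_sum_def
  by (rule infsum_reindex_bij_witness[of UNIV "\<lambda>n. n + m" "\<lambda>n. n - m" UNIV]) (auto simp: algebra_simps)

section \<open>The squared cosecant\<close>

lemma infsum_int_even_odd:
  fixes f :: "int \<Rightarrow> real"
  assumes "\<And>A. f summable_on A"
  shows "infsum f UNIV = (\<Sum>\<^sub>\<infinity>n. f (2 * n)) + (\<Sum>\<^sub>\<infinity>n. f (2 * n - 1))"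
proof -
  have even: "(\<Sum>\<^sub>\<infinity>n. f (2 * n)) = infsum f (range (\<lambda>n. 2 * n))"
    using infsum_reindex[of "\<lambda>n::int. 2 * n" UNIV f] by (simp add: inj_on_def o_def)
  have odd: "(\<Sum>\<^sub>\<infinity>n. f (2 * n - 1)) = infsum f (range (\<lambda>n. 2 * n - 1))"
    using infsum_reindex[of "\<lambda>n::int. 2 * n - 1" UNIV f] by (simp add: inj_on_def o_def)
  have "x \<in> range (\<lambda>n. 2 * n) \<or> x \<in> range (\<lambda>n. 2 * n - 1)" for x :: int
  proof (cases "even x")
    case True
    then show ?thesis by (auto elim: evenE)
  next
    case False
    then have "x = 2 * ((x + 1) div 2) - 1" by presburger
    then show ?thesis by blast
  qed
  then have "range (\<lambda>n::int. 2 * n) \<union> range (\<lambda>n. 2 * n - 1) = UNIV" by blast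
  moreover have "range (\<lambda>n::int. 2 * n) \<inter> range (\<lambda>n. 2 * n - 1) = {}" by auto presburger
  ultimately show ?thesis unfolding even odd using infsum_Un_disjoint[OF assms assms] by metis
qed

lemma recip_square_sum_duplication:
  "recip_power_sum 2 (t / 2) + recip_power_sum 2 ((t + 1) / 2) = 4 * recip_power_sum 2 t"
proof -
  have scale: "1 / (s / 2 - of_int n) ^ 2 = 4 * (1 / (s - 2 * of_int n) ^ 2)" for s :: real and n :: int
    by (simp add: field_simps power2_eq_square)
  have "recip_power_sum 2 (t / 2) = 4 * (\<Sum>\<^sub>\<infinity>n::int. 1 / (t - of_int (2 * n)) ^ 2)"
    unfolding recip_power_sum_def scale infsum_cmult_right' by simp
  moreover have "recip_power_sum 2 ((t + 1) / 2) = 4 * (\<Sum>\<^sub>\<infinity>n::int. 1 / (t - of_int (2 * n - 1)) ^ 2)"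
    unfolding recip_power_sum_def scale infsum_cmult_right' by (simp add: algebra_simps)
  moreover have "recip_power_sum 2 t = (\<Sum>\<^sub>\<infinity>n::int. 1 / (t - of_int (2 * n)) ^ 2)
                   + (\<Sum>\<^sub>\<infinity>n::int. 1 / (t - of_int (2 * n - 1)) ^ 2)"
    unfolding recip_power_sum_def by (rule infsum_int_even_odd) (rule recip_power_summable_on, simp)
  ultimately show ?thesis by simp
qed

lemma csc_square_duplication:
  fixes t :: real
  assumes "sin (pi * t) \<noteq> 0"
  shows "(pi / sin (pi * (t / 2))) ^ 2 + (pi / sin (pi * ((t + 1) / 2))) ^ 2 = 4 * (pi / sin (pi * t)) ^ 2"
proof -
  define s c where "s = sin (pi * t / 2)" and "c = cos (pi * t / 2)"
  have st: "sin (pi * t) = 2 * s * c" unfolding s_def c_def using sin_double[of "pi * t / 2"] by simp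
  then have nz: "s \<noteq> 0" "c \<noteq> 0" using assms by auto
  have "sin (pi * ((t + 1) / 2)) = c"
    using sin_add[of "pi * t / 2" "pi / 2"] by (simp add: c_def field_simps)
  moreover have "sin (pi * (t / 2)) = s" by (simp add: s_def)
  moreover have "(pi / s) ^ 2 + (pi / c) ^ 2 = pi ^ 2 * (s ^ 2 + c ^ 2) / (s ^ 2 * c ^ 2)"
    using nz by (simp add: field_simps power2_eq_square)
  moreover have "s ^ 2 + c ^ 2 = 1" unfolding s_def c_def by simp
  then have "pi ^ 2 * (s ^ 2 + c ^ 2) / (s ^ 2 * c ^ 2) = 4 * (pi / (2 * s * c)) ^ 2"
    using nz by (simp add: field_simps power2_eq_square)
  ultimately show ?thesis unfolding st by simp
qed

lemma sin_ge_cubic: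
  fixes x :: real
  assumes "0 \<le> x" "x \<le> 2"
  shows "x - x ^ 3 / 4 \<le> sin x"
proof -
  have taylor: "(\<Sum>m<4. sin_coeff m * x ^ m) = x - x ^ 3 / 6"
    by (simp add: sin_coeff_def eval_nat_numeral) presburger
  have "\<bar>sin x - (x - x ^ 3 / 6)\<bar> \<le> x ^ 4 / 24"
    using Maclaurin_sin_bound[of x 4] assms unfolding taylor by (simp add: eval_nat_numeral)
  moreover have "x ^ 4 \<le> x ^ 3 * 2"
    using assms mult_left_mono[of x 2 "x ^ 3"] by (simp add: eval_nat_numeral mult.commute)
  ultimately show ?thesis by linarith
qed

lemma inverse_sin_square_bounds:
  fixes x :: real
  assumes x: "0 < x" "x \<le> pi / 2"
  shows "0 \<le> 1 / sin x ^ 2 - 1 / x ^ 2" "1 / sin x ^ 2 - 1 / x ^ 2 \<le> 9 / 2"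
proof -
  have "pi \<le> 63 / 20" using pi_approx(2) by simp
  then have x2: "x \<le> 8 / 5" using x by linarith
  have sin_le: "sin x \<le> x" using x by (intro sin_x_le_x) auto
  have sin_pos: "0 < sin x" using x pi_gt_zero by (intro sin_gt_zero) linarith+
  have cubic: "x - sin x \<le> x ^ 3 / 4" using sin_ge_cubic[of x] x x2 by simp
  have "x ^ 2 \<le> (8 / 5) ^ 2" using x x2 by (intro power_mono) auto
  then have "x ^ 3 / 4 \<le> 2 * x / 3"
    using x mult_left_mono[of "x ^ 2" "(8 / 5) ^ 2" x] by (simp add: eval_nat_numeral)
  then have sin_ge: "x / 3 \<le> sin x" using cubic by linarith
  have "x ^ 2 - sin x ^ 2 = (x - sin x) * (x + sin x)" by (simp add: power2_eq_square algebra_simps)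
  also have "\<dots> \<le> (x ^ 3 / 4) * (2 * x)" using cubic sin_le sin_pos x by (intro mult_mono) auto
  finally have num: "x ^ 2 - sin x ^ 2 \<le> x ^ 4 / 2" by (simp add: eval_nat_numeral)
  have "x ^ 2 * (x / 3) ^ 2 \<le> x ^ 2 * sin x ^ 2" using sin_ge x by (intro mult_left_mono power_mono) auto
  then have den: "x ^ 4 / 9 \<le> x ^ 2 * sin x ^ 2" by (simp add: eval_nat_numeral power_divide)
  have eq: "1 / sin x ^ 2 - 1 / x ^ 2 = (x ^ 2 - sin x ^ 2) / (x ^ 2 * sin x ^ 2)"
    using x sin_pos by (simp add: field_simps)
  have pos: "0 < x ^ 2 * sin x ^ 2" using x sin_pos by simp
  show "0 \<le> 1 / sin x ^ 2 - 1 / x ^ 2"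
    unfolding eq using sin_le sin_pos pos by (intro divide_nonneg_pos) (auto intro: power_mono)
  show "1 / sin x ^ 2 - 1 / x ^ 2 \<le> 9 / 2"
    unfolding eq using num den pos by (simp add: divide_le_eq)
qed

lemma csc_square_minus_poles_bound_half:
  fixes u :: real
  assumes u: "0 < u" "u \<le> 1 / 2"
  shows "\<bar>(pi / sin (pi * u)) ^ 2 - 1 / u ^ 2 - 1 / (u - 1) ^ 2\<bar> \<le> 45"
proof -
  define x where "x = pi * u"
  have x: "0 < x" "x \<le> pi / 2" using u by (auto simp: x_def)
  have e: "(pi / sin (pi * u)) ^ 2 - 1 / u ^ 2 = pi ^ 2 * (1 / sin x ^ 2 - 1 / x ^ 2)"
    using u by (simp add: x_def field_simps power2_eq_square)
  have "pi ^ 2 \<le> (63 / 20) ^ 2" using pi_approx(2) by (intro power_mono) auto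
  then have "pi ^ 2 * (1 / sin x ^ 2 - 1 / x ^ 2) \<le> 10 * (9 / 2)"
    using inverse_sin_square_bounds[OF x] by (intro mult_mono) (auto simp: power_divide)
  moreover have "(1 / 2) ^ 2 \<le> (1 - u) ^ 2" using u by (intro power_mono) auto
  then have "1 / (u - 1) ^ 2 \<le> 4"
    using divide_left_mono[of "(1 / 2) ^ 2" "(1 - u) ^ 2" 1] u by (simp add: power2_commute power_divide)
  moreover have "0 \<le> pi ^ 2 * (1 / sin x ^ 2 - 1 / x ^ 2)" using inverse_sin_square_bounds(1)[OF x] by simp
  moreover have "0 \<le> 1 / (u - 1) ^ 2" by simp
  ultimately show ?thesis unfolding abs_le_iff e by linarith
qed

lemma csc_square_minus_poles_bound:
  fixes u :: real
  assumes u: "0 < u" "u < 1"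
  shows "\<bar>(pi / sin (pi * u)) ^ 2 - 1 / u ^ 2 - 1 / (u - 1) ^ 2\<bar> \<le> 45"
proof (cases "u \<le> 1 / 2")
  case True
  then show ?thesis using csc_square_minus_poles_bound_half u by simp
next
  case False
  have "sin (pi * u) = sin (pi * (1 - u))" by (simp add: algebra_simps)
  then have "(pi / sin (pi * u)) ^ 2 - 1 / u ^ 2 - 1 / (u - 1) ^ 2
      = (pi / sin (pi * (1 - u))) ^ 2 - 1 / (1 - u) ^ 2 - 1 / ((1 - u) - 1) ^ 2"
    by (simp add: power2_commute)
  then show ?thesis using csc_square_minus_poles_bound_half[of "1 - u"] u False by simp
qed

lemma recip_square_sum_minus_poles:
  fixes u :: real
  assumes u: "0 < u" "u < 1"
  obtains R where "recip_power_sum 2 u = 1 / u ^ 2 + 1 / (u - 1) ^ 2 + R"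
    and "0 \<le> R" "R \<le> 4 * recip_power_sum 2 0"
proof -
  define f where "f r = 1 / (u - of_int r) ^ 2" for r :: int
  define R where "R = infsum f (UNIV - {0, 1})"
  have sf: "f summable_on A" for A unfolding f_def by (rule recip_power_summable_on) simp
  have "recip_power_sum 2 u = infsum f ({0, 1} \<union> (UNIV - {0, 1}))"
    unfolding recip_power_sum_def f_def by simp
  also have "\<dots> = 1 / u ^ 2 + 1 / (u - 1) ^ 2 + R"
    unfolding R_def by (subst infsum_Un_disjoint[OF sf sf]) (auto simp: f_def)
  finally have split: "recip_power_sum 2 u = 1 / u ^ 2 + 1 / (u - 1) ^ 2 + R" .
  define g where "g r = 4 * (1 / (0 - of_int r) ^ 2 :: real)" for r :: int
  have sg: "g summable_on A" for A
    unfolding g_def by (intro summable_on_cmult_right recip_power_summable_on) simp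
  have "f r \<le> g r" if r: "r \<in> UNIV - {0, 1}" for r
  proof -
    have "\<bar>of_int r / 2\<bar> \<le> \<bar>u - of_int r\<bar>"
      using r u by (cases "r \<ge> 2") (auto simp: abs_if)
    then have "(of_int r / 2) ^ 2 \<le> (u - of_int r) ^ 2" by (metis power2_abs abs_ge_zero power_mono)
    moreover have "0 < (of_int r / 2 :: real) ^ 2" using r by simp
    ultimately have "f r \<le> 1 / (of_int r / 2) ^ 2"
      unfolding f_def by (metis le_imp_inverse_le inverse_eq_divide)
    then show ?thesis by (simp add: g_def power_divide)
  qed
  then have "R \<le> infsum g (UNIV - {0, 1})" unfolding R_def by (intro infsum_mono sf sg)
  also have "\<dots> \<le> infsum g UNIV" by (intro infsum_mono2 sg) (auto simp: g_def)
  also have "\<dots> = 4 * recip_power_sum 2 0" unfolding g_def recip_power_sum_def by (rule infsum_cmult_right')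
  finally have "R \<le> 4 * recip_power_sum 2 0" .
  moreover have "0 \<le> R" unfolding R_def f_def by (intro infsum_nonneg) simp
  ultimately show ?thesis using split that by blast
qed

lemma csc_square_shift: "(pi / sin (pi * (u + of_int n))) ^ 2 = (pi / sin (pi * u)) ^ 2"
proof -
  have "sin (pi * (u + of_int n)) = sin (pi * u) * cos (of_int n * pi)"
    by (simp add: distrib_left sin_add sin_times_pi_eq_0 mult.commute)
  moreover have "cos (of_int n * pi) ^ 2 = 1" by (simp add: cos_squared_eq sin_times_pi_eq_0)
  ultimately show ?thesis by (simp add: power_divide power_mult_distrib)
qed

lemma recip_square_sum_minus_csc_square_bounded:
  obtains B where "\<And>t. t \<notin> \<int> \<Longrightarrow> \<bar>recip_power_sum 2 t - (pi / sin (pi * t)) ^ 2\<bar> \<le> B"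
proof
  fix t :: real assume t: "t \<notin> \<int>"
  define u where "u = t - of_int \<lfloor>t\<rfloor>"
  have u: "0 < u" "u < 1"
    using t of_int_floor_le[of t] unfolding u_def by (metis Ints_of_int diff_gt_0_iff_gt order_le_less, linarith)
  have "t = u + of_int \<lfloor>t\<rfloor>" by (simp add: u_def)
  then have "recip_power_sum 2 t - (pi / sin (pi * t)) ^ 2 = recip_power_sum 2 u - (pi / sin (pi * u)) ^ 2"
    by (metis recip_power_sum_shift csc_square_shift)
  moreover obtain R where "recip_power_sum 2 u = 1 / u ^ 2 + 1 / (u - 1) ^ 2 + R"
    and "0 \<le> R" "R \<le> 4 * recip_power_sum 2 0"
    using recip_square_sum_minus_poles[OF u] .
  ultimately show "\<bar>recip_power_sum 2 t - (pi / sin (pi * t)) ^ 2\<bar> \<le> 4 * recip_power_sum 2 0 + 45"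
    using csc_square_minus_poles_bound[OF u] by (simp add: abs_le_iff)
qed

lemma half_not_Ints:
  fixes t :: real
  assumes "t \<notin> \<int>"
  shows "t / 2 \<notin> \<int>" "(t + 1) / 2 \<notin> \<int>"
proof -
  have "t = 2 * (t / 2)" "t = 2 * ((t + 1) / 2) - 1" by (simp_all add: field_simps)
  then show "t / 2 \<notin> \<int>" "(t + 1) / 2 \<notin> \<int>"
    using assms by (metis Ints_mult Ints_numeral Ints_diff Ints_1)+
qed

lemma sin_pi_nonzero: "(t::real) \<notin> \<int> \<Longrightarrow> sin (pi * t) \<noteq> 0"
  using sin_times_pi_eq_0[of t] by (simp add: mult.commute)

lemma recip_square_sum_eq_csc_square:
  assumes "t \<notin> \<int>"
  shows "recip_power_sum 2 t = (pi / sin (pi * t)) ^ 2"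
proof -
  define D where "D t = recip_power_sum 2 t - (pi / sin (pi * t)) ^ 2" for t
  obtain B where B: "\<And>t. t \<notin> \<int> \<Longrightarrow> \<bar>D t\<bar> \<le> B"
    using recip_square_sum_minus_csc_square_bounded unfolding D_def by blast
  have dup: "4 * D t = D (t / 2) + D ((t + 1) / 2)" if "t \<notin> \<int>" for t
    using recip_square_sum_duplication[of t] csc_square_duplication[OF sin_pi_nonzero[OF that]]
    unfolding D_def by simp
  txt \<open>Each application of the duplication formula halves the bound on \<open>\<bar>D\<bar>\<close>.\<close>
  have "\<bar>D t\<bar> \<le> B / 2 ^ n" if "t \<notin> \<int>" for n t
    using that
  proof (induction n arbitrary: t)
    case 0
    then show ?case using B by simp
  next
    case (Suc n)
    have "4 * \<bar>D t\<bar> \<le> \<bar>D (t / 2)\<bar> + \<bar>D ((t + 1) / 2)\<bar>" using dup[OF Suc.prems] by linarith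
    also have "\<dots> \<le> 2 * (B / 2 ^ n)"
      using Suc.IH half_not_Ints[OF Suc.prems] by (smt (verit))
    finally show ?case by simp
  qed
  moreover have "(\<lambda>n. B / 2 ^ n) \<longlonglongrightarrow> 0" by (rule LIMSEQ_divide_realpow_zero) simp
  ultimately have "\<bar>D t\<bar> \<le> 0" using assms by (intro LIMSEQ_le_const) auto
  then show ?thesis unfolding D_def by simp
qed

section \<open>Even powers of the cosecant\<close>

lemma esym_sq_0: "esym_sq n 0 = 1"
proof -
  have "A = {}" if "A \<subseteq> {1..n - 1}" "card A = 0" for A
    using that finite_subset[OF that(1)] by simp
  then have "{A. A \<subseteq> {1..n - 1} \<and> card A = 0} = {{}}" by auto
  then show ?thesis by (simp add: esym_sq_def)
qed

lemma esym_sq_eq_0: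
  assumes "n \<le> k" "1 \<le> n"
  shows "esym_sq n k = 0"
proof -
  have "card A \<noteq> k" if "A \<subseteq> {1..n - 1}" for A
    using card_mono[OF _ that] assms by simp
  then have empty: "{A. A \<subseteq> {1..n - 1} \<and> card A = k} = {}" by blast
  show ?thesis unfolding esym_sq_def empty by simp
qed

lemma subsets_card_split_top:
  fixes n k :: nat
  assumes n: "1 \<le> n" and k: "1 \<le> k"
  shows "{A. A \<subseteq> {1..n} \<and> card A = k}
           = {A. A \<subseteq> {1..n - 1} \<and> card A = k} \<union> insert n ` {A. A \<subseteq> {1..n - 1} \<and> card A = k - 1}"
    (is "?S n k = ?S (n - 1) k \<union> insert n ` ?S (n - 1) (k - 1)")
proof -
  have "A \<in> ?S (n - 1) k \<union> insert n ` ?S (n - 1) (k - 1)" if A: "A \<in> ?S n k" for A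
  proof (cases "n \<in> A")
    case True
    have "finite A" using A by (auto intro: finite_subset)
    then have "A - {n} \<in> ?S (n - 1) (k - 1)" "A = insert n (A - {n})" using A True by auto
    then show ?thesis by blast
  next
    case False
    have "A \<subseteq> {1..n - 1}"
    proof
      fix x assume "x \<in> A"
      with A False have "x \<in> {1..n}" "x \<noteq> n" by auto
      then show "x \<in> {1..n - 1}" by auto
    qed
    then show ?thesis using A by auto
  qed
  moreover have "insert n B \<in> ?S n k" if B: "B \<in> ?S (n - 1) (k - 1)" for B
  proof -
    have "finite B" "n \<notin> B" using B n by (auto intro: finite_subset)
    moreover have "{1..n - 1} \<subseteq> {1..n}" "n \<in> {1..n}" using n by auto
    then have "insert n B \<subseteq> {1..n}" using B by blast
    ultimately show ?thesis using B k by simp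
  qed
  moreover have "?S (n - 1) k \<subseteq> ?S n k" by (auto simp: subset_eq)
  ultimately show ?thesis by blast
qed

lemma esym_sq_Suc:
  assumes n: "1 \<le> n" and k: "1 \<le> k"
  shows "esym_sq (Suc n) k = esym_sq n k + real n ^ 2 * esym_sq n (k - 1)"
proof -
  define S where "S j = {A. A \<subseteq> {1..n - 1} \<and> card A = j}" for j
  have fin: "finite (S j)" for j unfolding S_def by (rule finite_subset[of _ "Pow {1..n - 1}"]) auto
  have notin: "n \<notin> B" "finite B" if "B \<in> S j" for B j using that n by (auto simp: S_def intro: finite_subset)
  have esym: "esym_sq n j = (\<Sum>A\<in>S j. \<Prod>i\<in>A. real i ^ 2)" for j by (simp add: esym_sq_def S_def)
  have "esym_sq (Suc n) k = (\<Sum>A\<in>S k \<union> insert n ` S (k - 1). \<Prod>i\<in>A. real i ^ 2)"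
    unfolding esym_sq_def diff_Suc_1 subsets_card_split_top[OF n k] S_def ..
  also have "\<dots> = esym_sq n k + (\<Sum>A\<in>insert n ` S (k - 1). \<Prod>i\<in>A. real i ^ 2)"
    unfolding esym using notin by (intro sum.union_disjoint fin finite_imageI) auto
  also have "(\<Sum>A\<in>insert n ` S (k - 1). \<Prod>i\<in>A. real i ^ 2) = (\<Sum>B\<in>S (k - 1). \<Prod>i\<in>insert n B. real i ^ 2)"
    using notin by (intro sum.reindex[unfolded o_def] inj_onI) (metis insert_ident)
  also have "\<dots> = real n ^ 2 * esym_sq n (k - 1)"
    unfolding esym sum_distrib_left using notin by (intro sum.cong refl) simp
  finally show ?thesis .
qed

definition csc_power :: "nat \<Rightarrow> real \<Rightarrow> real" where
  "csc_power n t = (pi / sin (pi * t)) ^ (2 * n)"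

lemma csc_pi_deriv:
  assumes "sin (pi * t) \<noteq> 0"
  shows "((\<lambda>t. pi / sin (pi * t)) has_real_derivative (- pi * pi * cos (pi * t) / sin (pi * t) ^ 2)) (at t)"
  by (rule derivative_eq_intros refl)+ (use assms in \<open>simp_all add: power2_eq_square\<close>)

lemma cot_pi_deriv:
  assumes "sin (pi * t) \<noteq> 0"
  shows "((\<lambda>t. cos (pi * t) / sin (pi * t)) has_real_derivative (- pi / sin (pi * t) ^ 2)) (at t)"
proof -
  have "((\<lambda>t. cos (pi * t) / sin (pi * t)) has_real_derivative
      (- sin (pi * t) * pi * sin (pi * t) - cos (pi * t) * (cos (pi * t) * pi)) / (sin (pi * t) * sin (pi * t))) (at t)"
    by (rule derivative_eq_intros refl)+ (use assms in simp_all)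
  moreover have "- sin (pi * t) * pi * sin (pi * t) - cos (pi * t) * (cos (pi * t) * pi) = - pi"
    using sin_cos_squared_add3[of "pi * t"] by algebra
  ultimately show ?thesis by (simp add: power2_eq_square)
qed

lemma csc_power_deriv:
  assumes "sin (pi * t) \<noteq> 0"
  shows "(csc_power n has_real_derivative
           (- 2 * real n * pi * (cos (pi * t) / sin (pi * t)) * csc_power n t)) (at t)"
proof -
  have "(csc_power n has_real_derivative
      of_nat (2 * n) * ((- pi * pi * cos (pi * t) / sin (pi * t) ^ 2) * (pi / sin (pi * t)) ^ (2 * n - Suc 0))) (at t)"
    unfolding csc_power_def[abs_def] by (rule DERIV_power[OF csc_pi_deriv[OF assms]])
  moreover have "of_nat (2 * n) * ((- pi * pi * cos (pi * t) / sin (pi * t) ^ 2) * (pi / sin (pi * t)) ^ (2 * n - Suc 0))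
      = - 2 * real n * pi * (cos (pi * t) / sin (pi * t)) * csc_power n t"
    using assms by (cases n) (simp_all add: csc_power_def field_simps power2_eq_square)
  ultimately show ?thesis by simp
qed

lemma csc_power_second_deriv:
  assumes s: "sin (pi * t) \<noteq> 0"
  shows "((\<lambda>t. - 2 * real n * pi * (cos (pi * t) / sin (pi * t)) * csc_power n t) has_real_derivative
          (2 * real n * (2 * real n + 1) * csc_power (Suc n) t - 4 * real n ^ 2 * pi ^ 2 * csc_power n t)) (at t)"
proof -
  define S C X where "S = sin (pi * t)" and "C = cos (pi * t)" and "X = csc_power n t"
  have "((\<lambda>t. - 2 * real n * pi * (cos (pi * t) / sin (pi * t)) * csc_power n t) has_real_derivative
      (- 2 * real n * pi * (C / S)) * (- 2 * real n * pi * (C / S) * X) + (- 2 * real n * pi * (- pi / S ^ 2)) * X) (at t)"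
    unfolding S_def C_def X_def by (rule DERIV_mult'[OF DERIV_cmult[OF cot_pi_deriv[OF s]] csc_power_deriv[OF s]])
  moreover have "csc_power (Suc n) t = X * (pi / S) ^ 2"
  proof -
    have "2 * Suc n = 2 * n + 2" by simp
    then show ?thesis unfolding csc_power_def X_def S_def by (simp only: power_add)
  qed
  moreover have "C ^ 2 = 1 - S ^ 2" unfolding S_def C_def by (simp add: cos_squared_eq)
  then have "(- 2 * real n * pi * (C / S)) * (- 2 * real n * pi * (C / S) * X) + (- 2 * real n * pi * (- pi / S ^ 2)) * X
      = 2 * real n * (2 * real n + 1) * (X * (pi / S) ^ 2) - 4 * real n ^ 2 * pi ^ 2 * X"
    using s unfolding S_def[symmetric]
    by (simp add: field_simps power2_eq_square) algebra
  ultimately show ?thesis by (simp add: X_def)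
qed

text \<open>The coefficient of \<open>recip_power_sum (2 * j + 2)\<close> in \<open>csc_power n\<close> (lemma
  \<open>csc_power_expansion\<close>); \<open>s(n, n - 1 - j)\<close> enters through the recursion \<open>esym_sq_Suc\<close>.\<close>

definition csc_coeff :: "nat \<Rightarrow> nat \<Rightarrow> real" where
  "csc_coeff n j = (4 * pi ^ 2) ^ (n - 1 - j) * esym_sq n (n - 1 - j) * fact (2 * j + 1) / fact (2 * n - 1)"

lemma fact_add_3: "(fact (2 * i + 3) :: real) = fact (2 * i + 1) * (real (2 * i + 2) * real (2 * i + 3))"
proof -
  have "2 * i + 3 = Suc (Suc (2 * i + 1))" by simp
  then show ?thesis by (simp only: fact_Suc) (simp add: algebra_simps)
qed

lemma csc_coeff_diag: "csc_coeff (Suc m) m = 1"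
  by (simp add: csc_coeff_def esym_sq_0)

lemma csc_coeff_Suc_0:
  "2 * real (Suc m) * (2 * real (Suc m) + 1) * csc_coeff (Suc (Suc m)) 0
     = 4 * real (Suc m) ^ 2 * pi ^ 2 * csc_coeff (Suc m) 0"
proof -
  define D F E where "D = 2 * real (Suc m) * (2 * real (Suc m) + 1)"
    and "F = (fact (2 * m + 1) :: real)" and "E = esym_sq (Suc m) m"
  have "esym_sq (Suc (Suc m)) (Suc m) = real (Suc m) ^ 2 * E"
    using esym_sq_Suc[of "Suc m" "Suc m"] esym_sq_eq_0[of "Suc m" "Suc m"] by (simp add: E_def)
  moreover have "(fact (2 * m + 3) :: real) = F * D"
    using fact_add_3[of m] by (simp add: D_def F_def algebra_simps)
  ultimately have c2: "csc_coeff (Suc (Suc m)) 0 = (4 * pi ^ 2) ^ Suc m * (real (Suc m) ^ 2 * E) / (F * D)"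
    by (simp add: csc_coeff_def numeral_3_eq_3)
  have c1: "csc_coeff (Suc m) 0 = (4 * pi ^ 2) ^ m * E / F" by (simp add: csc_coeff_def E_def F_def)
  have "D \<noteq> 0" "F \<noteq> 0" by (simp_all add: D_def F_def)
  then show ?thesis unfolding D_def[symmetric] c1 c2 by (simp add: field_simps)
qed

lemma csc_coeff_Suc_Suc:
  assumes "i < m"
  shows "2 * real (Suc m) * (2 * real (Suc m) + 1) * csc_coeff (Suc (Suc m)) (Suc i)
     = real (2 * i + 2) * real (2 * i + 3) * csc_coeff (Suc m) i
       + 4 * real (Suc m) ^ 2 * pi ^ 2 * csc_coeff (Suc m) (Suc i)"
proof -
  define k where "k = m - Suc i"
  have mi: "m - i = Suc k" using assms by (simp add: k_def)
  define D F f X P E1 E0 where "D = 2 * real (Suc m) * (2 * real (Suc m) + 1)"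
    and "F = (fact (2 * i + 1) :: real)" and "f = (fact (2 * m + 1) :: real)"
    and "X = real (2 * i + 2) * real (2 * i + 3)" and "P = (4 * pi ^ 2) ^ k"
    and "E1 = esym_sq (Suc m) (Suc k)" and "E0 = esym_sq (Suc m) k"
  have fi: "(fact (2 * Suc i + 1) :: real) = F * X"
    using fact_add_3[of i] by (simp add: F_def X_def)
  have fm: "(fact (2 * Suc (Suc m) - 1) :: real) = f * D"
    using fact_add_3[of m] by (simp add: f_def D_def algebra_simps)
  have c1: "csc_coeff (Suc m) i = 4 * pi ^ 2 * P * E1 * F / f"
    by (simp add: csc_coeff_def mi P_def E1_def F_def f_def)
  have c2: "csc_coeff (Suc m) (Suc i) = P * E0 * (F * X) / f"
    unfolding csc_coeff_def fi by (simp add: k_def P_def E0_def f_def)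
  have c3: "csc_coeff (Suc (Suc m)) (Suc i) = 4 * pi ^ 2 * P * (E1 + real (Suc m) ^ 2 * E0) * (F * X) / (f * D)"
    unfolding csc_coeff_def fi fm using esym_sq_Suc[of "Suc m" "Suc k"] mi
    by (simp add: P_def E1_def E0_def)
  have "f \<noteq> 0" "D \<noteq> 0" by (simp_all add: f_def D_def)
  then show ?thesis unfolding D_def[symmetric] X_def[symmetric] c1 c2 c3 by (simp add: field_simps)
qed

lemma sum_csc_coeff_Suc:
  fixes g :: "nat \<Rightarrow> real" and m :: nat
  defines "D \<equiv> 2 * real (Suc m) * (2 * real (Suc m) + 1)"
  shows "D * (\<Sum>j<Suc (Suc m). csc_coeff (Suc (Suc m)) j * g j)
       = (\<Sum>j<Suc m. real (2 * j + 2) * real (2 * j + 3) * csc_coeff (Suc m) j * g (Suc j))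
         + 4 * real (Suc m) ^ 2 * pi ^ 2 * (\<Sum>j<Suc m. csc_coeff (Suc m) j * g j)"
proof -
  define X where "X j = real (2 * j + 2) * real (2 * j + 3)" for j
  define c where "c = 4 * real (Suc m) ^ 2 * pi ^ 2"
  have top: "D * csc_coeff (Suc (Suc m)) (Suc m) = X m * csc_coeff (Suc m) m"
    by (simp add: csc_coeff_diag D_def X_def)
  have "D * (\<Sum>j<Suc (Suc m). csc_coeff (Suc (Suc m)) j * g j)
      = D * csc_coeff (Suc (Suc m)) 0 * g 0 + (\<Sum>i<m. D * csc_coeff (Suc (Suc m)) (Suc i) * g (Suc i))
        + D * csc_coeff (Suc (Suc m)) (Suc m) * g (Suc m)"
    by (subst sum.lessThan_Suc_shift, subst sum.lessThan_Suc) (simp add: sum_distrib_left algebra_simps)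
  also have "\<dots> = c * csc_coeff (Suc m) 0 * g 0
      + (\<Sum>i<m. (X i * csc_coeff (Suc m) i + c * csc_coeff (Suc m) (Suc i)) * g (Suc i))
      + X m * csc_coeff (Suc m) m * g (Suc m)"
    using csc_coeff_Suc_0[of m] csc_coeff_Suc_Suc[of _ m] top
    unfolding D_def[symmetric] X_def c_def by (simp add: mult.assoc)
  also have "\<dots> = (\<Sum>j<Suc m. X j * csc_coeff (Suc m) j * g (Suc j)) + c * (\<Sum>j<Suc m. csc_coeff (Suc m) j * g j)"
    unfolding sum.lessThan_Suc_shift[of "\<lambda>j. csc_coeff (Suc m) j * g j"]
      sum.lessThan_Suc[of "\<lambda>j. X j * csc_coeff (Suc m) j * g (Suc j)"]
    by (simp add: sum.distrib sum_distrib_left algebra_simps)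
  finally show ?thesis unfolding X_def c_def .
qed

lemma recip_power_combination_derivs:
  fixes x :: real
  assumes "x \<notin> \<int>"
  shows "((\<lambda>x. \<Sum>j<n. c j * recip_power_sum (2 * j + 2) x) has_real_derivative
           (\<Sum>j<n. c j * (- real (2 * j + 2) * recip_power_sum (2 * j + 3) x))) (at x)"
    and "((\<lambda>x. \<Sum>j<n. c j * (- real (2 * j + 2) * recip_power_sum (2 * j + 3) x)) has_real_derivative
           (\<Sum>j<n. real (2 * j + 2) * real (2 * j + 3) * c j * recip_power_sum (2 * j + 4) x)) (at x)"
proof -
  have d1: "(recip_power_sum (2 * j + 2) has_real_derivative - real (2 * j + 2) * recip_power_sum (2 * j + 3) x) (at x)"
    and d2: "(recip_power_sum (2 * j + 3) has_real_derivative - real (2 * j + 3) * recip_power_sum (2 * j + 4) x) (at x)"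
    for j using recip_power_sum_deriv[OF _ assms, of "2 * j + 2"] recip_power_sum_deriv[OF _ assms, of "2 * j + 3"]
    by (simp_all add: eval_nat_numeral)
  show "((\<lambda>x. \<Sum>j<n. c j * recip_power_sum (2 * j + 2) x) has_real_derivative
           (\<Sum>j<n. c j * (- real (2 * j + 2) * recip_power_sum (2 * j + 3) x))) (at x)"
    by (intro DERIV_sum DERIV_cmult d1)
  show "((\<lambda>x. \<Sum>j<n. c j * (- real (2 * j + 2) * recip_power_sum (2 * j + 3) x)) has_real_derivative
           (\<Sum>j<n. real (2 * j + 2) * real (2 * j + 3) * c j * recip_power_sum (2 * j + 4) x)) (at x)"
    by (intro DERIV_sum DERIV_cong[OF DERIV_cmult[OF DERIV_cmult[OF d2]]]) (simp add: algebra_simps)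
qed

lemma csc_power_Suc_from_expansion:
  fixes t :: real
  assumes expansion: "\<And>x. x \<notin> \<int> \<Longrightarrow> csc_power n x = (\<Sum>j<n. c j * recip_power_sum (2 * j + 2) x)"
    and t: "t \<notin> \<int>"
  shows "2 * real n * (2 * real n + 1) * csc_power (Suc n) t
           = (\<Sum>j<n. real (2 * j + 2) * real (2 * j + 3) * c j * recip_power_sum (2 * j + 4) t)
             + 4 * real n ^ 2 * pi ^ 2 * csc_power n t"
proof -
  define F' where "F' x = (\<Sum>j<n. c j * (- real (2 * j + 2) * recip_power_sum (2 * j + 3) x))" for x
  txt \<open>\<open>cot_csc\<close> is the derivative of \<open>csc_power n\<close>; near \<open>t\<close> it also equals the termwise
    derivative \<open>F'\<close> of the expansion, which we differentiate once more.\<close>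
  define cot_csc where "cot_csc x = - 2 * real n * pi * (cos (pi * x) / sin (pi * x)) * csc_power n x" for x
  have "open (- \<int> :: real set)" by (simp add: open_Compl)
  then obtain d where "0 < d" and B: "ball t d \<subseteq> - \<int>" using t by (auto simp: open_contains_ball)
  have "cot_csc x = F' x" if "x \<in> ball t d" for x
  proof (rule DERIV_unique)
    have x: "x \<notin> \<int>" using B that by auto
    show "(csc_power n has_real_derivative cot_csc x) (at x)"
      unfolding cot_csc_def by (rule csc_power_deriv[OF sin_pi_nonzero[OF x]])
    show "(csc_power n has_real_derivative F' x) (at x)"
      unfolding F'_def using B expansion
      by (intro has_field_derivative_transform_within_open[OF recip_power_combination_derivs(1)[OF x] _ that]) auto
  qed
  then have "(cot_csc has_real_derivative
      (\<Sum>j<n. real (2 * j + 2) * real (2 * j + 3) * c j * recip_power_sum (2 * j + 4) t)) (at t)"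
    using \<open>0 < d\<close> unfolding F'_def
    by (intro has_field_derivative_transform_within_open[OF recip_power_combination_derivs(2)[OF t] open_ball[of t d]]) auto
  moreover have "(cot_csc has_real_derivative
      2 * real n * (2 * real n + 1) * csc_power (Suc n) t - 4 * real n ^ 2 * pi ^ 2 * csc_power n t) (at t)"
    unfolding cot_csc_def[abs_def] by (rule csc_power_second_deriv[OF sin_pi_nonzero[OF t]])
  ultimately have "(\<Sum>j<n. real (2 * j + 2) * real (2 * j + 3) * c j * recip_power_sum (2 * j + 4) t)
      = 2 * real n * (2 * real n + 1) * csc_power (Suc n) t - 4 * real n ^ 2 * pi ^ 2 * csc_power n t"
    by (rule DERIV_unique)
  then show ?thesis by simp
qed

lemma csc_power_expansion:
  fixes t :: real
  assumes "t \<notin> \<int>"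
  shows "csc_power (Suc m) t = (\<Sum>j<Suc m. csc_coeff (Suc m) j * recip_power_sum (2 * j + 2) t)"
  using assms
proof (induction m arbitrary: t)
  case 0
  then show ?case
    using recip_square_sum_eq_csc_square[OF 0] csc_coeff_diag[of 0]
    by (simp add: csc_power_def flip: numeral_2_eq_2)
next
  case (Suc m)
  have expansion: "\<And>x. x \<notin> \<int> \<Longrightarrow>
      csc_power (Suc m) x = (\<Sum>j<Suc m. csc_coeff (Suc m) j * recip_power_sum (2 * j + 2) x)"
    by (rule Suc.IH)
  have index: "2 * Suc j + 2 = 2 * j + 4" for j by simp
  have "2 * real (Suc m) * (2 * real (Suc m) + 1) * csc_power (Suc (Suc m)) t
      = (\<Sum>j<Suc m. real (2 * j + 2) * real (2 * j + 3) * csc_coeff (Suc m) j * recip_power_sum (2 * j + 4) t)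
        + 4 * real (Suc m) ^ 2 * pi ^ 2 * csc_power (Suc m) t"
    by (rule csc_power_Suc_from_expansion[OF expansion Suc.prems])
  also have "\<dots> = 2 * real (Suc m) * (2 * real (Suc m) + 1) *
      (\<Sum>j<Suc (Suc m). csc_coeff (Suc (Suc m)) j * recip_power_sum (2 * j + 2) t)"
    unfolding expansion[OF Suc.prems] sum_csc_coeff_Suc index ..
  finally show ?case by simp
qed

section \<open>Summing over the points \<open>k / (2 m)\<close>\<close>

lemma recip_power_sum_0_eq:
  assumes "even s"
  shows "recip_power_sum s 0 = (\<Sum>\<^sub>\<infinity>r::int. 1 / of_int r ^ s)"
  using assms unfolding recip_power_sum_def by (simp add: power_minus_even)

lemma summable_on_recip_power_int:
  assumes "even s" "2 \<le> s"
  shows "(\<lambda>r::int. 1 / (of_int r :: real) ^ s) summable_on A"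
  using recip_power_summable_on[of s 0 A] assms by (simp add: power_minus_even)

lemma recip_power_sum_eq_zeta:
  assumes s: "even s" "2 \<le> s"
  shows "recip_power_sum s 0 = 2 * zeta_real (real s)"
proof -
  define z where "z = (\<Sum>n. 1 / real (Suc n) ^ s)"
  have "summable (\<lambda>n. 1 / real n ^ s)"
    using inverse_power_summable[of s, where 'a=real] s by (simp add: inverse_eq_divide)
  then have z1: "(\<lambda>n. 1 / real (Suc n) ^ s) sums z"
    using summable_Suc_iff[of "\<lambda>n. 1 / real n ^ s"] by (simp add: z_def summable_sums del: of_nat_Suc)
  then have z0: "(\<lambda>n. 1 / real n ^ s) sums z"
    using sums_Suc_iff[of "\<lambda>n. 1 / real n ^ s" z] s by (simp add: power_0_left del: of_nat_Suc)
  have "(\<lambda>j. 1 / (0 - real j) ^ s + 1 / (0 + real j + 1) ^ s) = (\<lambda>j. 1 / real j ^ s + 1 / real (Suc j) ^ s)"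
    using s(1) by (intro ext) (simp add: power_minus_even add.commute)
  then have "(\<lambda>j. 1 / real j ^ s + 1 / real (Suc j) ^ s) sums recip_power_sum s 0"
    using sums_recip_power_sum[of s 0] s by simp
  then have "recip_power_sum s 0 = z + z" using sums_add[OF z0 z1] by (rule sums_unique2)
  moreover have "zeta_real (real s) = z"
    unfolding zeta_real_def z_def by (intro suminf_cong) (simp add: powr_realpow del: of_nat_Suc)
  ultimately show ?thesis by simp
qed

lemma not_dvd_punctured_range:
  fixes m k :: nat
  assumes "k \<in> {1..2 * m - 1} - {m}"
  shows "\<not> m dvd k"
proof
  assume "m dvd k"
  then obtain q where q: "k = m * q" by (elim dvdE)
  consider "q = 0" | "q = 1" | "q \<ge> 2" by linarith
  then show False
  proof cases
    case 3
    then have "m * 2 \<le> k" unfolding q by (rule mult_le_mono2)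
    then show False using assms by auto
  qed (use assms q in auto)
qed

lemma shifted_residues_image:
  fixes m :: nat
  assumes m: "1 \<le> m"
  shows "(\<lambda>(k, n). int k - 2 * int m * n) ` (({1..2 * m - 1} - {m}) \<times> UNIV) = {r. \<not> int m dvd r}"
proof (intro equalityI subsetI)
  fix x assume "x \<in> (\<lambda>(k, n). int k - 2 * int m * n) ` (({1..2 * m - 1} - {m}) \<times> UNIV)"
  then obtain p where p: "p \<in> ({1..2 * m - 1} - {m}) \<times> (UNIV :: int set)"
    and "x = (\<lambda>(k, n). int k - 2 * int m * n) p" by (rule imageE)
  moreover obtain k n where "p = (k, n)" by (cases p)
  ultimately have k: "k \<in> {1..2 * m - 1} - {m}" and x: "x = int k - 2 * int m * n" by auto
  have "int k = x + int m * (2 * n)" using x by simp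
  then have "int m dvd x \<Longrightarrow> m dvd k" by (metis dvd_add dvd_triv_left int_dvd_int_iff)
  then show "x \<in> {r. \<not> int m dvd r}" using not_dvd_punctured_range[OF k] by blast
next
  fix r :: int assume "r \<in> {r. \<not> int m dvd r}"
  then have r: "\<not> int m dvd r" by simp
  define M where "M = 2 * int m"
  have M: "M > 0" using m by (simp add: M_def)
  define rho where "rho = r mod M"
  define d where "d = r div M"
  have rd: "r = M * d + rho" by (simp add: rho_def d_def)
  have rho: "0 \<le> rho" "rho < M" using M by (simp_all add: rho_def)
  have r0: "rho \<noteq> 0"
  proof
    assume "rho = 0" then have "r = int m * (2 * d)" using rd by (simp add: M_def)
    then show False using r by simp
  qed
  have rm: "rho \<noteq> int m"
  proof
    assume "rho = int m" then have "r = int m * (2 * d + 1)" using rd by (simp add: M_def algebra_simps)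
    then show False using r by simp
  qed
  have "nat rho \<in> {1..2 * m - 1} - {m}" using rho r0 rm by (auto simp: M_def)
  moreover have "r = int (nat rho) - 2 * int m * (- d)" using rd rho by (simp add: M_def)
  ultimately show "r \<in> (\<lambda>(k, n). int k - 2 * int m * n) ` (({1..2 * m - 1} - {m}) \<times> UNIV)"
    by (intro image_eqI[of _ _ "(nat rho, - d)"]) auto
qed

lemma inj_on_shifted_residues:
  fixes m :: nat
  assumes m: "1 \<le> m"
  shows "inj_on (\<lambda>(k, n). int k - 2 * int m * n) (({1..2 * m - 1} - {m}) \<times> UNIV)"
proof (rule inj_onI)
  fix x y assume x: "x \<in> ({1..2 * m - 1} - {m}) \<times> (UNIV :: int set)" and y: "y \<in> ({1..2 * m - 1} - {m}) \<times> (UNIV :: int set)"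
    and exy: "(\<lambda>(k, n). int k - 2 * int m * n) x = (\<lambda>(k, n). int k - 2 * int m * n) y"
  obtain k n where xk: "x = (k, n)" by (cases x)
  obtain k' n' where yk: "y = (k', n')" by (cases y)
  have k: "k \<in> {1..2 * m - 1} - {m}" and k': "k' \<in> {1..2 * m - 1} - {m}" using x y xk yk by auto
  have eq: "int k - 2 * int m * n = int k' - 2 * int m * n'" using exy xk yk by simp
  have e2: "int k - int k' = 2 * int m * (n - n')" using eq by (simp add: algebra_simps)
  have bk: "int k < 2 * int m" "int k' < 2 * int m" "0 < int k" "0 < int k'" using k k' m by auto
  have "n = n'"
  proof (rule ccontr)
    assume "n \<noteq> n'"
    then have "n - n' \<ge> 1 \<or> n - n' \<le> -1" by auto
    then show False
    proof
      assume "n - n' \<ge> 1"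
      then have "2 * int m * 1 \<le> 2 * int m * (n - n')" by (intro mult_left_mono) auto
      then show False using e2 bk by linarith
    next
      assume "n - n' \<le> -1"
      then have "2 * int m * (n - n') \<le> 2 * int m * (-1)" by (intro mult_left_mono) auto
      then show False using e2 bk by linarith
    qed
  qed
  then show "x = y" using e2 xk yk by simp
qed

lemma recip_power_sum_at_fraction:
  fixes a c :: real
  assumes "c \<noteq> 0"
  shows "recip_power_sum s (a / c) = c ^ s * (\<Sum>\<^sub>\<infinity>n::int. 1 / (a - c * of_int n) ^ s)"
proof -
  have scale: "1 / (a / c - of_int n) ^ s = c ^ s * (1 / (a - c * of_int n) ^ s)" for n :: int
  proof -
    have "a - c * of_int n = c * (a / c - of_int n)" using assms by (simp add: algebra_simps)
    then show ?thesis using assms by (cases "a / c - of_int n = 0"; cases s) (simp_all add: power_mult_distrib)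
  qed
  show ?thesis unfolding recip_power_sum_def scale by (rule infsum_cmult_right')
qed

lemma infsum_recip_power_not_dvd:
  fixes m s :: nat
  assumes m: "1 \<le> m" and s: "even s" "2 \<le> s"
  shows "(\<Sum>\<^sub>\<infinity>r\<in>{r. \<not> int m dvd r}. 1 / (of_int r :: real) ^ s) = (1 - 1 / real m ^ s) * recip_power_sum s 0"
proof -
  define h where "h r = 1 / (of_int r :: real) ^ s" for r :: int
  have sh: "h summable_on A" for A unfolding h_def by (rule summable_on_recip_power_int[OF s])
  have "inj (\<lambda>q::int. int m * q)" using m by (auto simp: inj_on_def)
  moreover have "range (\<lambda>q::int. int m * q) = {r. int m dvd r}" by (auto elim: dvdE)
  ultimately have "infsum h {r. int m dvd r} = (\<Sum>\<^sub>\<infinity>q. h (int m * q))"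
    using infsum_reindex[of "\<lambda>q::int. int m * q" UNIV h] by (simp add: o_def)
  also have "\<dots> = (\<Sum>\<^sub>\<infinity>q. 1 / real m ^ s * h q)" by (simp add: h_def power_mult_distrib)
  also have "\<dots> = 1 / real m ^ s * infsum h UNIV" by (rule infsum_cmult_right')
  finally have dvd: "infsum h {r. int m dvd r} = 1 / real m ^ s * infsum h UNIV" .
  have "infsum h ({r. int m dvd r} \<union> {r. \<not> int m dvd r})
      = infsum h {r. int m dvd r} + infsum h {r. \<not> int m dvd r}"
    by (rule infsum_Un_disjoint[OF sh sh]) auto
  moreover have "{r. int m dvd r} \<union> {r. \<not> int m dvd r} = UNIV" by auto
  moreover have "recip_power_sum s 0 = infsum h UNIV" unfolding h_def by (rule recip_power_sum_0_eq[OF s(1)])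
  ultimately show ?thesis unfolding h_def[symmetric] dvd by (simp add: algebra_simps)
qed

lemma sum_recip_power_sum_at_fractions:
  fixes m s :: nat
  assumes m: "1 \<le> m" and s: "even s" "2 \<le> s"
  shows "(\<Sum>k\<in>{1..2 * m - 1} - {m}. recip_power_sum s (real k / (2 * real m)))
           = (2 * real m) ^ s * (1 - 1 / real m ^ s) * recip_power_sum s 0"
proof -
  define K where "K = {1..2 * m - 1} - {m}"
  define h where "h r = 1 / (of_int r :: real) ^ s" for r :: int
  define phi where "phi = (\<lambda>(k::nat, n::int). int k - 2 * int m * n)"
  have inj: "inj_on phi (K \<times> UNIV)" unfolding phi_def K_def by (rule inj_on_shifted_residues[OF m])
  have "h summable_on phi ` (K \<times> UNIV)" unfolding h_def by (rule summable_on_recip_power_int[OF s])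
  then have summable: "(h \<circ> phi) summable_on (K \<times> UNIV)" using summable_on_reindex[OF inj, of h] by blast
  have "recip_power_sum s (real k / (2 * real m)) = (2 * real m) ^ s * (\<Sum>\<^sub>\<infinity>n. h (phi (k, n)))" for k
    using recip_power_sum_at_fraction[of "2 * real m" s "real k"] m by (simp add: h_def phi_def)
  then have "(\<Sum>k\<in>K. recip_power_sum s (real k / (2 * real m)))
      = (2 * real m) ^ s * (\<Sum>k\<in>K. \<Sum>\<^sub>\<infinity>n. (h \<circ> phi) (k, n))"
    by (simp add: sum_distrib_left)
  also have "(\<Sum>k\<in>K. \<Sum>\<^sub>\<infinity>n. (h \<circ> phi) (k, n)) = infsum (h \<circ> phi) (K \<times> UNIV)"
    using infsum_Sigma_banach[OF summable] by (simp add: K_def)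
  also have "\<dots> = infsum h {r. \<not> int m dvd r}"
    using infsum_reindex[OF inj, of h] shifted_residues_image[OF m] by (simp add: phi_def K_def)
  also have "\<dots> = (1 - 1 / real m ^ s) * recip_power_sum s 0"
    unfolding h_def by (rule infsum_recip_power_not_dvd[OF m s])
  finally show ?thesis by (simp add: K_def)
qed

section \<open>The Gardner--Fisher sum\<close>

lemma sum_punctured_reflect:
  fixes f :: "nat \<Rightarrow> 'a::comm_semiring_1"
  assumes "\<And>k. 1 \<le> k \<Longrightarrow> k < m \<Longrightarrow> f (2 * m - k) = f k"
  shows "(\<Sum>k\<in>{1..2 * m - 1} - {m}. f k) = 2 * (\<Sum>k=1..m - 1. f k)"
proof -
  have "(\<Sum>k\<in>{m + 1..2 * m - 1}. f k) = (\<Sum>k=1..m - 1. f k)"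
  proof (rule sum.reindex_bij_witness[of _ "\<lambda>k. 2 * m - k" "\<lambda>k. 2 * m - k"])
    fix k assume "k \<in> {m + 1..2 * m - 1}"
    then show "f (2 * m - k) = f k" using assms[of "2 * m - k"] by auto
  qed auto
  moreover have "{1..2 * m - 1} - {m} = {1..m - 1} \<union> {m + 1..2 * m - 1}" by auto
  then have "(\<Sum>k\<in>{1..2 * m - 1} - {m}. f k) = (\<Sum>k=1..m - 1. f k) + (\<Sum>k\<in>{m + 1..2 * m - 1}. f k)"
    by (simp add: sum.union_disjoint)
  ultimately show ?thesis by (simp add: mult_2)
qed

lemma csc_power_reflect:
  assumes "k \<le> 2 * m"
  shows "csc_power v (real (2 * m - k) / (2 * real m)) = csc_power v (real k / (2 * real m))"
proof (cases "m = 0")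
  case False
  then have "pi * (real (2 * m - k) / (2 * real m)) = pi - pi * (real k / (2 * real m))"
    using assms by (simp add: of_nat_diff field_simps)
  then show ?thesis by (simp add: csc_power_def)
qed simp

lemma sum_csc_power_at_fractions:
  assumes m: "1 \<le> m"
  shows "(\<Sum>k=1..m - 1. csc_power (Suc u) (real k / (2 * real m)))
      = (\<Sum>j<Suc u. csc_coeff (Suc u) j * zeta_real (real (2 * j + 2)) * 4 ^ (j + 1) * (real m ^ (2 * (j + 1)) - 1))"
proof -
  define K where "K = {1..2 * m - 1} - {m}"
  have not_Int: "real k / (2 * real m) \<notin> \<int>" if "k \<in> K" for k
  proof -
    have "0 < real k / (2 * real m)" "real k / (2 * real m) < 1" using that m by (auto simp: K_def)
    then show ?thesis using frac_gt_0_iff[of "real k / (2 * real m)"] frac_eq[of "real k / (2 * real m)"] by simp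
  qed
  have at_fractions: "(\<Sum>k\<in>K. recip_power_sum (2 * j + 2) (real k / (2 * real m)))
      = (2 * real m) ^ (2 * j + 2) * (1 - 1 / real m ^ (2 * j + 2)) * (2 * zeta_real (real (2 * j + 2)))" for j
    unfolding K_def using sum_recip_power_sum_at_fractions[OF m, of "2 * j + 2"]
      recip_power_sum_eq_zeta[of "2 * j + 2"] by simp
  have "2 * (\<Sum>k=1..m - 1. csc_power (Suc u) (real k / (2 * real m)))
      = (\<Sum>k\<in>K. csc_power (Suc u) (real k / (2 * real m)))"
    unfolding K_def by (rule sum_punctured_reflect[symmetric], rule csc_power_reflect) simp
  also have "\<dots> = (\<Sum>k\<in>K. \<Sum>j<Suc u. csc_coeff (Suc u) j * recip_power_sum (2 * j + 2) (real k / (2 * real m)))"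
    using not_Int by (intro sum.cong refl csc_power_expansion)
  also have "\<dots> = (\<Sum>j<Suc u. csc_coeff (Suc u) j * (\<Sum>k\<in>K. recip_power_sum (2 * j + 2) (real k / (2 * real m))))"
    by (subst sum.swap) (simp add: sum_distrib_left)
  also have "\<dots> = (\<Sum>j<Suc u. csc_coeff (Suc u) j * ((2 * real m) ^ (2 * j + 2) * (1 - 1 / real m ^ (2 * j + 2))
                      * (2 * zeta_real (real (2 * j + 2)))))"
    by (simp only: at_fractions)
  also have "\<dots> = 2 * (\<Sum>j<Suc u. csc_coeff (Suc u) j * zeta_real (real (2 * j + 2)) * 4 ^ (j + 1) * (real m ^ (2 * (j + 1)) - 1))"
  proof -
    have scale: "(2 * real m) ^ (2 * j + 2) * (1 - 1 / real m ^ (2 * j + 2)) = 4 ^ (j + 1) * (real m ^ (2 * (j + 1)) - 1)" for j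
    proof -
      have "(2 * real m) ^ (2 * (j + 1)) = 4 ^ (j + 1) * real m ^ (2 * (j + 1))"
        unfolding power_mult by (simp add: power_mult_distrib)
      then show ?thesis using m by (simp add: field_simps)
    qed
    show ?thesis unfolding sum_distrib_left by (intro sum.cong refl) (simp only: scale, simp add: mult_ac)
  qed
  finally show ?thesis by simp
qed

lemma GF_sum_eq_sum_csc_power:
  "GF_sum m v = (1 / (2 * real m)) ^ (2 * v) * (\<Sum>k=1..m - 1. csc_power v (real k / (2 * real m)))"
proof -
  have "(pi / (2 * real m)) ^ (2 * v) * (1 / sin (real k * pi / (2 * real m)) ^ (2 * v))
      = (1 / (2 * real m)) ^ (2 * v) * csc_power v (real k / (2 * real m))" for k
    by (simp add: csc_power_def power_divide mult.commute)
  then show ?thesis unfolding GF_sum_def sum_distrib_left by simp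
qed

lemma poly_geometric_combination:
  fixes a :: "nat \<Rightarrow> 'a::comm_ring_1"
  assumes "a u \<noteq> 0"
  obtains p where "degree p = u" "lead_coeff p = a u" "poly p 0 = (\<Sum>j\<le>u. a j)"
    "\<And>x. (x - 1) * poly p x = (\<Sum>j\<le>u. a j * (x ^ (j + 1) - 1))"
proof
  define p where "p = (\<Sum>j\<le>u. smult (a j) (\<Sum>i<Suc j. monom 1 i))"
  have coeff_p: "coeff p n = (\<Sum>j\<le>u. if n \<le> j then a j else 0)" for n
    unfolding p_def by (simp add: coeff_sum coeff_monom less_Suc_eq_le) (rule sum.cong, auto)
  have "coeff p u = a u"
    unfolding coeff_p by (subst sum.cong[where h = "\<lambda>j. if j = u then a j else 0"]) auto
  moreover have "coeff p n = 0" if "u < n" for n using that by (simp add: coeff_p)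
  ultimately show deg: "degree p = u" using assms by (metis le_degree degree_le antisym)
  with \<open>coeff p u = a u\<close> show "lead_coeff p = a u" by simp
  show "poly p 0 = (\<Sum>j\<le>u. a j)" by (simp add: poly_0_coeff_0 coeff_p)
  fix x
  have "poly p x = (\<Sum>j\<le>u. a j * (\<Sum>i<j + 1. x ^ i))" unfolding p_def by (simp add: poly_sum poly_monom)
  then show "(x - 1) * poly p x = (\<Sum>j\<le>u. a j * (x ^ (j + 1) - 1))"
    by (simp only: sum_distrib_left power_diff_1_eq mult.left_commute)
qed

lemma zeta_real_pos:
  assumes "2 \<le> s"
  shows "0 < zeta_real (real s)"
proof -
  have "summable (\<lambda>n. 1 / real n ^ s)"
    using inverse_power_summable[of s, where 'a=real] assms by (simp add: inverse_eq_divide)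
  then have "summable (\<lambda>n. 1 / real (Suc n) ^ s)"
    using summable_Suc_iff[of "\<lambda>n. 1 / real n ^ s"] by (simp del: of_nat_Suc)
  moreover have "zeta_real (real s) = (\<Sum>n. 1 / real (Suc n) ^ s)"
    unfolding zeta_real_def by (intro suminf_cong) (simp add: powr_realpow del: of_nat_Suc)
  ultimately show ?thesis by (simp add: suminf_pos)
qed

text \<open>The polynomial of the theorem is \<open>(\<Sum>j\<le>v-1. gf_coeff v j * (x ^ (j + 1) - 1)) / (x - 1)\<close>.\<close>

definition gf_coeff :: "nat \<Rightarrow> nat \<Rightarrow> real" where
  "gf_coeff v j = csc_coeff v j * zeta_real (real (2 * j + 2)) * 4 ^ (j + 1) / 2 ^ v"

lemma GF_sum_eq_gf_coeff_sum:
  assumes m: "1 \<le> m"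
  shows "GF_sum m (Suc u) = (2 * (real m)^2) powi (- int (Suc u))
           * (\<Sum>j\<le>u. gf_coeff (Suc u) j * (((real m)^2) ^ (j + 1) - 1))"
proof -
  have "(2 * real m) ^ (2 * Suc u) = ((2 * real m) ^ 2) ^ Suc u" by (rule power_mult)
  also have "\<dots> = (2 * (real m)^2) ^ Suc u * 2 ^ Suc u"
    by (simp add: power2_eq_square power_mult_distrib[symmetric] mult_ac)
  finally have calc: "(2 * real m) ^ (2 * Suc u) = (2 * (real m)^2) ^ Suc u * 2 ^ Suc u" .
  have "(2 * (real m)^2) powi (- int (Suc u)) = inverse ((2 * (real m)^2) ^ Suc u)"
    by (simp only: power_int_minus power_int_of_nat)
  then have scale: "(1 / (2 * real m)) ^ (2 * Suc u) = (2 * (real m)^2) powi (- int (Suc u)) / 2 ^ Suc u"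
    unfolding power_one_over calc by (simp add: inverse_eq_divide)
  have sq: "((real m)^2) ^ (j + 1) = real m ^ (2 * (j + 1))" for j by (rule power_mult[symmetric])
  have "(\<Sum>j\<le>u. gf_coeff (Suc u) j * (real m ^ (2 * (j + 1)) - 1))
      = (\<Sum>j<Suc u. csc_coeff (Suc u) j * zeta_real (real (2 * j + 2)) * 4 ^ (j + 1) * (real m ^ (2 * (j + 1)) - 1))
        / 2 ^ Suc u"
    by (simp add: gf_coeff_def sum_divide_distrib lessThan_Suc_atMost mult_ac)
  then show ?thesis
    unfolding GF_sum_eq_sum_csc_power sum_csc_power_at_fractions[OF m] sq scale by simp
qed

lemma gf_coeff_top: "gf_coeff (Suc u) u = 2 ^ Suc u * zeta_real (real (2 * Suc u))"
proof -
  have "(4::real) ^ (u + 1) = 2 ^ Suc u * 2 ^ Suc u" by (simp flip: power_mult_distrib)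
  then show ?thesis by (simp add: gf_coeff_def csc_coeff_diag)
qed

lemma gf_coeff_reflect:
  assumes "j \<le> u"
  shows "gf_coeff (Suc u) (u - j) = 2 ^ Suc u / fact (2 * Suc u - 1) *
           (pi ^ (2 * j) * esym_sq (Suc u) j * Gamma (real (2 * Suc u - 2 * j)) * zeta_real (real (2 * Suc u - 2 * j)))"
proof -
  define i where "i = u - j"
  have ij: "i + j = u" "u - i = j" using assms by (simp_all add: i_def)
  define F Fv Z E where "F = (fact (2 * i + 1) :: real)" and "Fv = (fact (2 * Suc u - 1) :: real)"
    and "Z = zeta_real (real (2 * i + 2))" and "E = esym_sq (Suc u) j"
  have coeff: "csc_coeff (Suc u) i = 4 ^ j * pi ^ (2 * j) * E * F / Fv"
    using ij by (simp add: csc_coeff_def E_def F_def Fv_def power_mult_distrib power_mult)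
  have "(4::real) ^ j * 4 ^ (i + 1) = (2 * 2) ^ Suc u" using ij by (simp flip: power_add)
  then have four: "(4::real) ^ j * 4 ^ (i + 1) = 2 ^ Suc u * 2 ^ Suc u" by (simp only: power_mult_distrib)
  have "gf_coeff (Suc u) i = (4 ^ j * 4 ^ (i + 1)) * pi ^ (2 * j) * E * F * Z / (Fv * 2 ^ Suc u)"
    unfolding gf_coeff_def coeff Z_def[symmetric] by (simp add: field_simps)
  also have "\<dots> = 2 ^ Suc u / Fv * (pi ^ (2 * j) * E * F * Z)"
    using fact_nonzero[of "2 * Suc u - 1"] unfolding four by (simp add: Fv_def[symmetric] field_simps)
  finally have "gf_coeff (Suc u) i = 2 ^ Suc u / Fv * (pi ^ (2 * j) * E * F * Z)" .
  moreover have "2 * Suc u - 2 * j = 2 * i + 2" using ij by simp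
  moreover have "Gamma (real (2 * i + 2)) = F"
    using Gamma_fact[of "2 * i + 1"] by (simp add: F_def add.commute)
  ultimately show ?thesis by (simp add: i_def[symmetric] Z_def E_def Fv_def)
qed

theorem mainTheorem4:
  fixes v :: nat
  assumes "v \<ge> 1"
  shows "\<exists>p :: real poly.
     degree p = v - 1 \<and>
     (\<forall>m::nat. m \<ge> 1 \<longrightarrow>
        GF_sum m v = (2 * (real m)^2) powi (- int v) * ((real m)^2 - 1) * poly p ((real m)^2)) \<and>
     lead_coeff p = 2 ^ v * zeta_real (real (2 * v)) \<and>
     poly p 0 = 2 ^ v / fact (2 * v - 1) *
        (\<Sum>j = 0..v - 1. pi ^ (2 * j) * esym_sq v j * Gamma (real (2 * v - 2 * j))
                           * zeta_real (real (2 * v - 2 * j)))"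
proof -
  obtain u where v: "v = Suc u" using assms by (cases v) auto
  have "gf_coeff v u \<noteq> 0" using zeta_real_pos[of "2 * v"] by (simp add: v gf_coeff_top)
  then obtain p :: "real poly" where "degree p = u" "lead_coeff p = gf_coeff v u"
    and p0: "poly p 0 = (\<Sum>j\<le>u. gf_coeff v j)"
    and px: "\<And>x. (x - 1) * poly p x = (\<Sum>j\<le>u. gf_coeff v j * (x ^ (j + 1) - 1))"
    using poly_geometric_combination[of "gf_coeff v" u] by blast
  moreover have "GF_sum m v = (2 * (real m)^2) powi (- int v) * ((real m)^2 - 1) * poly p ((real m)^2)"
    if "m \<ge> 1" for m
    using GF_sum_eq_gf_coeff_sum[OF that, of u] px[of "(real m)^2"] by (simp add: v mult.assoc)
  moreover have "poly p 0 = (\<Sum>j = 0..u. gf_coeff v (u - j))"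
    unfolding p0 atLeast0AtMost[symmetric] by (subst sum.atLeastAtMost_rev) simp
  ultimately show ?thesis
    by (intro exI[of _ p]) (simp add: v gf_coeff_top gf_coeff_reflect sum_distrib_left)
qed

end
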